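(* There is a universal constant $c$ such that for every sufficiently large integer $N$ there are $N$ points $x_1,\dots,x_N$ on $\mathbb{S}^2$ such that for every unit vector $v\in\mathbb{S}^2$, at most $c\frac{\ln N}{\ln\ln N}$ of the points $x_i$ lie in the strip $\{x\in\mathbb{S}^2:|\langle v,x\rangle|\le\frac1N\}$.
   Context: $\mathbb{S}^2=\{x\in\mathbb{R}^3:|x|=1\}$. *)

theory Defs
  imports "HOL-Analysis.Analysis"
begin

end

theory Submission
  imports Defs "HOL-Real_Asymp.Real_Asymp"
begin

text \<open>
  The points are chosen at random among the central projections to the sphere of the lattice
  points (a, b, M), |a|, |b| \<le> M = N^2, on a plane far above the origin. A strip of width
  O(1/N) about a great circle meets this plane in a slab containing only an O(1/N) fraction of
  the lattice points, so N independent uniform choices put k points into a fixed strip with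
  probability at most C^k / k!. Every strip of width 1/N lies in one of (2N + 1)^3 slightly
  wider strips whose normals form a lattice net, and collisions have probability at most
  N^2 / M^2. For k \<approx> 8 ln N / ln ln N the union bound over all these events is below 1,
  so some choice of the points meets every strip in fewer than k of them.
\<close>

section \<open>Factorials beat exponentials\<close>

lemma fact_ge_power_div_exp: "(real k / exp 1) ^ k \<le> fact k"
proof -
  have s: "(\<lambda>n. real k ^ n / fact n) sums exp (real k)"
    using exp_converges[of "real k"] by (simp add: divide_inverse mult.commute)
  then have "real k ^ k / fact k \<le> exp (real k)"
    using sum_le_suminf[of "\<lambda>n. real k ^ n / fact n" "{k}"] by (auto simp: sums_iff)
  moreover have "exp (real k) = exp 1 ^ k"
    by (metis exp_of_nat_mult mult.right_neutral)
  ultimately show ?thesis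
    by (simp add: field_simps)
qed

lemma fact_ge_exp_mult_ln:
  fixes c t :: real
  assumes c: "c > 0" and t: "c * exp 1 \<le> t" "t \<le> real k"
  shows "c ^ k * exp (t * ln (t / (c * exp 1))) \<le> fact k"
proof -
  define b where "b = t / (c * exp 1)"
  have b1: "1 \<le> b"
    using t c by (simp add: b_def field_simps)
  have "exp (t * ln b) = b powr t"
    using b1 by (simp add: powr_def)
  also have "\<dots> \<le> b powr real k"
    using t b1 by (intro powr_mono) auto
  also have "\<dots> = b ^ k"
    using b1 by (simp add: powr_realpow)
  also have "\<dots> \<le> (real k / (c * exp 1)) ^ k"
  proof (rule power_mono)
    show "b \<le> real k / (c * exp 1)"
      using t c unfolding b_def by (simp add: divide_right_mono)
  qed (use b1 in linarith)
  finally have "c ^ k * exp (t * ln b) \<le> c ^ k * (real k / (c * exp 1)) ^ k"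
    using c by (simp add: mult_left_mono)
  also have "\<dots> = (real k / exp 1) ^ k"
    using c by (simp add: power_divide power_mult_distrib)
  also have "\<dots> \<le> fact k"
    by (rule fact_ge_power_div_exp)
  finally show ?thesis
    by (simp add: b_def)
qed

lemma mult_power_div_fact_less_half:
  fixes B c t :: real
  assumes B: "0 \<le> B" and c: "0 < c" and t: "c * exp 1 \<le> t" "t \<le> real k"
    and growth: "2 * B < exp (t * ln (t / (c * exp 1)))"
  shows "B * c ^ k / fact k < 1/2"
proof -
  have "c ^ k / fact k \<le> 1 / exp (t * ln (t / (c * exp 1)))"
    using fact_ge_exp_mult_ln[OF c t] by (simp add: field_simps)
  then have "B * c ^ k / fact k \<le> B / exp (t * ln (t / (c * exp 1)))"
    using mult_left_mono[OF _ B] by fastforce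
  also have "\<dots> < 1/2"
    using growth by (simp add: field_simps)
  finally show ?thesis .
qed

section \<open>Maps into a finite set that avoid many small sets\<close>

lemma card_PiE_hits_ge:
  assumes "finite I" "finite A" "S \<subseteq> A"
  shows "card {f \<in> I \<rightarrow>\<^sub>E A. k \<le> card {i\<in>I. f i \<in> S}}
           \<le> (card I choose k) * card S ^ k * card A ^ (card I - k)"
proof -
  let ?J = "{J. J \<subseteq> I \<and> card J = k}"
  let ?F = "\<lambda>J. PiE I (\<lambda>i. if i \<in> J then S else A)"
  have cover: "{f \<in> I \<rightarrow>\<^sub>E A. k \<le> card {i\<in>I. f i \<in> S}} \<subseteq> (\<Union>J\<in>?J. ?F J)"
  proof
    fix f assume f: "f \<in> {f \<in> I \<rightarrow>\<^sub>E A. k \<le> card {i\<in>I. f i \<in> S}}"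
    then obtain J where J: "J \<subseteq> {i\<in>I. f i \<in> S}" "card J = k"
      using obtain_subset_with_card_n[of k "{i\<in>I. f i \<in> S}"] by auto
    then show "f \<in> (\<Union>J\<in>?J. ?F J)"
      using f by (auto simp: PiE_iff)
  qed
  have card_F: "card (?F J) = card S ^ k * card A ^ (card I - k)" if "J \<in> ?J" for J
  proof -
    have J: "J \<subseteq> I" "card J = k"
      using that by auto
    have "card (?F J) = (\<Prod>i\<in>I. if i \<in> J then card S else card A)"
      using assms(1) by (simp add: card_PiE if_distrib)
    also have "\<dots> = card S ^ card J * card A ^ card (I - J)"
      using assms(1) J(1) by (simp add: prod.If_cases Int_absorb1 Diff_eq)
    also have "card (I - J) = card I - k"
      using assms(1) J by (simp add: card_Diff_subset finite_subset)
    finally show ?thesis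
      using J by simp
  qed
  have "finite ?J"
    by (rule finite_subset[of _ "Pow I"]) (use assms(1) in auto)
  moreover have "finite (\<Union>J\<in>?J. ?F J)"
    using calculation assms by (auto intro!: finite_PiE dest: finite_subset)
  ultimately have "card {f \<in> I \<rightarrow>\<^sub>E A. k \<le> card {i\<in>I. f i \<in> S}} \<le> (\<Sum>J\<in>?J. card (?F J))"
    using card_mono[OF _ cover] card_UN_le[of ?J ?F] by linarith
  also have "\<dots> = card ?J * (card S ^ k * card A ^ (card I - k))"
    using card_F by simp
  also have "card ?J = card I choose k"
    using n_subsets[OF assms(1)] by simp
  finally show ?thesis
    by (simp add: mult.assoc)
qed

lemma card_PiE_not_inj_on:
  assumes "finite I" "finite A"
  shows "card {f \<in> I \<rightarrow>\<^sub>E A. \<not> inj_on f I} \<le> card I ^ 2 * card A ^ (card I - 1)"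
proof -
  let ?F = "\<lambda>(i, j). {f \<in> I \<rightarrow>\<^sub>E A. i \<noteq> j \<and> f i = f j}"
  have cover: "{f \<in> I \<rightarrow>\<^sub>E A. \<not> inj_on f I} \<subseteq> (\<Union>p\<in>I \<times> I. ?F p)"
    by (auto simp: inj_on_def)
  have card_F: "card (?F (i, j)) \<le> card A ^ (card I - 1)" if "i \<in> I" "j \<in> I" for i j
  proof (cases "i = j")
    case False
    \<comment> \<open>forgetting the value at i loses nothing, since it equals the value at j\<close>
    have "inj_on (\<lambda>f. f(i := undefined)) (?F (i, j))"
    proof (rule inj_onI)
      fix f g assume f: "f \<in> ?F (i, j)" and g: "g \<in> ?F (i, j)"
        and eq: "f(i := undefined) = g(i := undefined)"
      have "f j = g j"
        using fun_cong[OF eq, of j] False by simp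
      show "f = g"
      proof
        fix x
        show "f x = g x"
          using fun_cong[OF eq, of x] \<open>f j = g j\<close> f g by (cases "x = i") auto
      qed
    qed
    moreover have "(\<lambda>f. f(i := undefined)) ` ?F (i, j) \<subseteq> (I - {i}) \<rightarrow>\<^sub>E A"
      by (auto simp: PiE_iff extensional_def split: if_splits)
    ultimately have "card (?F (i, j)) \<le> card ((I - {i}) \<rightarrow>\<^sub>E A)"
      using assms by (intro card_inj_on_le) (auto intro: finite_PiE)
    also have "\<dots> = card A ^ (card I - 1)"
      using assms that by (simp add: card_PiE)
    finally show ?thesis .
  qed simp
  have "finite (\<Union>p\<in>I \<times> I. ?F p)"
    using assms by (auto intro!: finite_PiE)
  then have "card {f \<in> I \<rightarrow>\<^sub>E A. \<not> inj_on f I} \<le> (\<Sum>p\<in>I \<times> I. card (?F p))"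
    using card_mono[OF _ cover] card_UN_le[of "I \<times> I" ?F] assms(1) by fastforce
  also have "\<dots> \<le> card (I \<times> I) * card A ^ (card I - 1)"
    using sum_bounded_above[of "I \<times> I" "\<lambda>p. card (?F p)"] card_F by fastforce
  finally show ?thesis
    by (simp add: card_cartesian_product power2_eq_square)
qed

lemma exists_inj_on_few_hits:
  fixes a :: real and T :: "'w \<Rightarrow> 'a set"
  assumes G: "finite G" "G \<noteq> {}" and W: "finite W" and N: "0 < N" "k \<le> N"
    and T: "\<And>w. w \<in> W \<Longrightarrow> T w \<subseteq> G \<and> real (card (T w)) \<le> a * card G / N"
    and small: "real (card W) * a ^ k / fact k + real N ^ 2 / card G < 1"
  shows "\<exists>f. (\<forall>i<N. f i \<in> G) \<and> inj_on f {..<N} \<and> (\<forall>w\<in>W. card {i. i < N \<and> f i \<in> T w} < k)"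
proof -
  define q where "q = card G"
  have q: "real q > 0"
    using G by (simp add: q_def card_gt_0_iff)
  define P where "P = {..<N} \<rightarrow>\<^sub>E G"
  define heavy where "heavy w = {f \<in> P. k \<le> card {i\<in>{..<N}. f i \<in> T w}}" for w
  define non_inj where "non_inj = {f \<in> P. \<not> inj_on f {..<N}}"
  have card_P: "real (card P) = real q ^ N"
    by (simp add: P_def card_PiE q_def)
  have card_heavy: "real (card (heavy w)) \<le> a ^ k / fact k * real q ^ N" if "w \<in> W" for w
  proof -
    have "card (heavy w) \<le> (N choose k) * card (T w) ^ k * q ^ (N - k)"
      using card_PiE_hits_ge[of "{..<N}" G "T w" k] G T[OF that] by (simp add: heavy_def P_def q_def)
    then have "real (card (heavy w)) \<le> real (N choose k) * real (card (T w)) ^ k * real q ^ (N - k)"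
      by (metis of_nat_le_iff of_nat_mult of_nat_power)
    also have "\<dots> \<le> real N ^ k / fact k * (a * q / N) ^ k * real q ^ (N - k)"
    proof (intro mult_right_mono mult_mono power_mono)
      have "real (N choose k) * fact k \<le> real N ^ k"
        using binomial_fact_pow[of N k] by (metis of_nat_fact of_nat_le_iff of_nat_mult of_nat_power)
      then show "real (N choose k) \<le> real N ^ k / fact k"
        by (simp add: field_simps)
    qed (use T[OF that] in \<open>auto simp: q_def\<close>)
    also have "\<dots> = a ^ k / fact k * (real q ^ k * real q ^ (N - k))"
      using N by (simp add: power_divide power_mult_distrib field_simps)
    also have "real q ^ k * real q ^ (N - k) = real q ^ N"
      using N by (simp flip: power_add)
    finally show ?thesis .
  qed
  have card_non_inj: "real (card non_inj) \<le> real N ^ 2 / q * real q ^ N"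
  proof -
    have "card non_inj \<le> N ^ 2 * q ^ (N - 1)"
      using card_PiE_not_inj_on[of "{..<N}" G] G by (simp add: non_inj_def P_def q_def)
    then have "real (card non_inj) \<le> real N ^ 2 * real q ^ (N - 1)"
      by (metis of_nat_le_iff of_nat_mult of_nat_power)
    also have "real q ^ (N - 1) = real q ^ N / q"
      using N q by (simp add: power_diff)
    finally show ?thesis
      by simp
  qed
  define bad where "bad = (\<Union>w\<in>W. heavy w) \<union> non_inj"
  have "finite bad"
    using G W by (auto simp: bad_def heavy_def non_inj_def P_def finite_PiE)
  have "card bad \<le> card (\<Union>w\<in>W. heavy w) + card non_inj"
    unfolding bad_def by (rule card_Un_le)
  also have "\<dots> \<le> (\<Sum>w\<in>W. card (heavy w)) + card non_inj"
    using card_UN_le[OF W] by simp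
  finally have "real (card bad) \<le> (\<Sum>w\<in>W. real (card (heavy w))) + card non_inj"
    by (metis of_nat_add of_nat_le_iff of_nat_sum)
  also have "\<dots> \<le> card W * (a ^ k / fact k * real q ^ N) + real N ^ 2 / q * real q ^ N"
    using sum_bounded_above[of W "\<lambda>w. real (card (heavy w))", OF card_heavy] card_non_inj
    by (intro add_mono) auto
  also have "\<dots> = (card W * a ^ k / fact k + real N ^ 2 / q) * real q ^ N"
    by (simp add: algebra_simps)
  also have "\<dots> < real q ^ N"
    using small q by (simp add: q_def)
  finally have "card bad < card P"
    using card_P by linarith
  then have "\<not> P \<subseteq> bad"
    using card_mono[OF \<open>finite bad\<close>] by (auto simp: not_le[symmetric])
  then obtain f where "f \<in> P" "f \<notin> bad"
    by blast
  then show ?thesis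
    by (auto simp: P_def bad_def heavy_def non_inj_def not_le)
qed

section \<open>Lattice nets and lattice points in slabs\<close>

lemma floor_scaled_dist_le:
  assumes "0 < N"
  shows "\<bar>x - of_int \<lfloor>real N * x\<rfloor> / real N\<bar> \<le> 1 / real N"
proof -
  have "\<bar>real N * x - of_int \<lfloor>real N * x\<rfloor>\<bar> \<le> 1"
    by linarith
  moreover have "x - of_int \<lfloor>real N * x\<rfloor> / real N = (real N * x - of_int \<lfloor>real N * x\<rfloor>) / real N"
    using assms by (simp add: field_simps)
  ultimately show ?thesis
    using assms by (simp add: abs_div_pos divide_right_mono)
qed

lemma finite_grid_net_cball:
  assumes "0 < N"
  shows "\<exists>W :: (real^'n) set. finite W \<and> card W \<le> (2 * N + 1) ^ CARD('n) \<and>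
           (\<forall>v\<in>cball 0 1. \<exists>w\<in>W. dist v w \<le> CARD('n) / N)"
proof (intro exI conjI ballI)
  let ?Z = "UNIV \<rightarrow>\<^sub>E {- int N..int N} :: ('n \<Rightarrow> int) set"
  let ?W = "(\<lambda>z. \<chi> i. of_int (z i) / real N) ` ?Z"
  show "finite ?W"
    by (simp add: finite_PiE)
  have "card ?W \<le> card ?Z"
    by (rule card_image_le) (simp add: finite_PiE)
  also have "card ?Z = (2 * N + 1) ^ CARD('n)"
    by (simp add: card_PiE nat_add_distrib nat_mult_distrib)
  finally show "card ?W \<le> (2 * N + 1) ^ CARD('n)" .
  fix v :: "real^'n"
  assume "v \<in> cball 0 1"
  then have v: "\<bar>v $ i\<bar> \<le> 1" for i
    using component_le_norm_cart[of v i] by simp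
  define w :: "real^'n" where "w = (\<chi> i. of_int \<lfloor>real N * v $ i\<rfloor> / real N)"
  have "(\<lambda>i. \<lfloor>real N * v $ i\<rfloor>) \<in> ?Z"
  proof -
    have "- real N \<le> real N * v $ i" "real N * v $ i \<le> real N" for i
      using mult_left_mono[OF v[of i, unfolded abs_le_iff, THEN conjunct1], of "real N"]
        mult_left_mono[OF v[of i, unfolded abs_le_iff, THEN conjunct2], of "real N"] by simp_all
    then show ?thesis
      by (simp add: PiE_iff le_floor_iff floor_le_iff add.commute add_strict_increasing)
  qed
  show "\<exists>w\<in>?W. dist v w \<le> CARD('n) / real N"
  proof (intro bexI)
    have "dist v w \<le> (\<Sum>i\<in>UNIV. \<bar>(v - w) $ i\<bar>)"
      unfolding dist_norm by (rule norm_le_l1_cart)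
    also have "\<dots> \<le> (\<Sum>i::'n\<in>UNIV. 1 / real N)"
      by (rule sum_mono) (use floor_scaled_dist_le[OF assms] in \<open>simp add: w_def\<close>)
    finally show "dist v w \<le> CARD('n) / real N"
      by simp
  qed (use \<open>(\<lambda>i. \<lfloor>real N * v $ i\<rfloor>) \<in> ?Z\<close> in \<open>auto simp: w_def\<close>)
qed

lemma card_int_slab_le:
  fixes A :: "int set" and \<alpha> c h :: real
  assumes "finite A" "\<alpha> \<noteq> 0" "0 \<le> h"
  shows "real (card {a\<in>A. \<bar>\<alpha> * a + c\<bar> \<le> h}) \<le> 2 * h / \<bar>\<alpha>\<bar> + 1"
proof -
  define m where "m = - c / \<alpha>"
  define r where "r = h / \<bar>\<alpha>\<bar>"
  have "{a\<in>A. \<bar>\<alpha> * a + c\<bar> \<le> h} \<subseteq> {\<lceil>m - r\<rceil>..\<lfloor>m + r\<rfloor>}"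
  proof
    fix a assume "a \<in> {a\<in>A. \<bar>\<alpha> * a + c\<bar> \<le> h}"
    moreover have "\<alpha> * a + c = \<alpha> * (a - m)"
      using assms(2) by (simp add: m_def field_simps)
    ultimately have "\<bar>\<alpha>\<bar> * \<bar>a - m\<bar> \<le> h"
      by (simp add: abs_mult)
    then have "\<bar>a - m\<bar> \<le> r"
      using assms(2) by (simp add: r_def field_simps)
    then show "a \<in> {\<lceil>m - r\<rceil>..\<lfloor>m + r\<rfloor>}"
      by (simp add: ceiling_le_iff le_floor_iff abs_le_iff)
  qed
  then have "card {a\<in>A. \<bar>\<alpha> * a + c\<bar> \<le> h} \<le> nat (\<lfloor>m + r\<rfloor> - \<lceil>m - r\<rceil> + 1)"
    using card_mono[of "{\<lceil>m - r\<rceil>..\<lfloor>m + r\<rfloor>}"] by simp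
  also have "real \<dots> \<le> 2 * r + 1"
  proof (cases "\<lfloor>m + r\<rfloor> - \<lceil>m - r\<rceil> + 1 \<ge> 0")
    case True
    then have "real (nat (\<lfloor>m + r\<rfloor> - \<lceil>m - r\<rceil> + 1)) = \<lfloor>m + r\<rfloor> - \<lceil>m - r\<rceil> + 1"
      by simp
    then show ?thesis
      using of_int_floor_le[of "m + r"] le_of_int_ceiling[of "m - r"] by linarith
  next
    case False
    then show ?thesis
      using assms by (simp add: r_def)
  qed
  finally show ?thesis
    by (simp add: r_def)
qed

lemma card_int_pairs_slab_le:
  fixes R :: "int set" and \<alpha> \<beta> c h :: real
  assumes "finite R" "\<alpha> \<noteq> 0" "0 \<le> h"
  shows "real (card {p\<in>R \<times> R. \<bar>\<alpha> * of_int (fst p) + \<beta> * of_int (snd p) + c\<bar> \<le> h}) \<le> card R * (2 * h / \<bar>\<alpha>\<bar> + 1)"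
proof -
  let ?L = "\<lambda>b. {a\<in>R. \<bar>\<alpha> * a + (\<beta> * b + c)\<bar> \<le> h}"
  have "{p\<in>R \<times> R. \<bar>\<alpha> * of_int (fst p) + \<beta> * of_int (snd p) + c\<bar> \<le> h} = (\<Union>b\<in>R. (\<lambda>a. (a, b)) ` ?L b)"
    by (auto simp: add.assoc)
  also have "card \<dots> \<le> (\<Sum>b\<in>R. card ((\<lambda>a. (a, b)) ` ?L b))"
    using assms(1) by (rule card_UN_le)
  also have "\<dots> \<le> (\<Sum>b\<in>R. card (?L b))"
    using assms(1) by (intro sum_mono card_image_le) simp
  finally have "real (card {p\<in>R \<times> R. \<bar>\<alpha> * of_int (fst p) + \<beta> * of_int (snd p) + c\<bar> \<le> h}) \<le> (\<Sum>b\<in>R. real (card (?L b)))"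
    by (simp only: of_nat_sum[symmetric] of_nat_le_iff)
  also have "\<dots> \<le> (\<Sum>b\<in>R. 2 * h / \<bar>\<alpha>\<bar> + 1)"
    using card_int_slab_le[OF assms] by (rule sum_mono)
  finally show ?thesis
    by simp
qed

section \<open>Strips of the sphere through a lifted square grid\<close>

definition square_grid :: "nat \<Rightarrow> (int \<times> int) set" where
  "square_grid M = {- int M..int M} \<times> {- int M..int M}"

definition lift :: "nat \<Rightarrow> int \<times> int \<Rightarrow> real^3" where
  "lift M p = vector [of_int (fst p), of_int (snd p), real M]"

definition grid_strip :: "nat \<Rightarrow> real^3 \<Rightarrow> real \<Rightarrow> (int \<times> int) set" where
  "grid_strip M w d = {p \<in> square_grid M. \<bar>w \<bullet> sgn (lift M p)\<bar> \<le> d}"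

lemma lift_nth [simp]: "lift M p $ 1 = of_int (fst p)" "lift M p $ 2 = of_int (snd p)" "lift M p $ 3 = real M"
  by (simp_all add: lift_def)

lemma inner_real3: "x \<bullet> y = x $ 1 * y $ 1 + x $ 2 * y $ 2 + x $ 3 * y $ 3" for x y :: "real^3"
  by (simp add: inner_vec_def sum_3)

lemma norm_real3_square: "norm x ^ 2 = (x $ 1)^2 + (x $ 2)^2 + (x $ 3)^2" for x :: "real^3"
  by (subst power2_norm_eq_inner) (simp add: inner_real3 power2_eq_square)

lemma finite_square_grid [simp]: "finite (square_grid M)"
  by (simp add: square_grid_def)

lemma card_square_grid: "card (square_grid M) = (2 * M + 1)^2"
  by (simp add: square_grid_def card_cartesian_product power2_eq_square nat_add_distrib nat_mult_distrib)

lemma finite_grid_strip [simp]: "finite (grid_strip M w d)"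
  by (simp add: grid_strip_def)

lemma lift_nonzero: "0 < M \<Longrightarrow> lift M p \<noteq> 0"
  by (metis lift_nth(3) of_nat_0_less_iff zero_index less_irrefl)

lemma norm_lift_le:
  assumes "p \<in> square_grid M"
  shows "norm (lift M p) \<le> 2 * real M"
proof (rule power2_le_imp_le)
  have "\<bar>of_int (fst p)\<bar> \<le> \<bar>real M\<bar>" "\<bar>of_int (snd p)\<bar> \<le> \<bar>real M\<bar>"
    using assms by (auto simp: square_grid_def abs_le_iff)
  then have "(of_int (fst p))^2 \<le> (real M)^2" "(of_int (snd p))^2 \<le> (real M)^2"
    by (simp_all only: abs_le_square_iff)
  then show "norm (lift M p) ^ 2 \<le> (2 * real M) ^ 2"
    by (simp add: norm_real3_square power_mult_distrib) (use zero_le_power2[of "real M"] in linarith)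
qed simp

lemma inj_sgn_lift:
  assumes "0 < M"
  shows "inj (\<lambda>p. sgn (lift M p))"
proof (rule injI)
  fix p q assume eq: "sgn (lift M p) = sgn (lift M q)"
  have pos: "norm (lift M p) > 0" "norm (lift M q) > 0"
    using lift_nonzero[OF assms] by auto
  have "sgn (lift M p) $ 3 = sgn (lift M q) $ 3"
    using eq by simp
  then have "real M / norm (lift M p) = real M / norm (lift M q)"
    by (simp add: sgn_div_norm divide_inverse_commute)
  then have norm_eq: "norm (lift M p) = norm (lift M q)"
    using assms pos by (simp add: field_simps)
  have "lift M p = norm (lift M p) *\<^sub>R sgn (lift M p)" "lift M q = norm (lift M q) *\<^sub>R sgn (lift M q)"
    using pos by (simp_all add: sgn_div_norm)
  then have "lift M p = lift M q"
    using eq norm_eq by simp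
  then have "lift M p $ 1 = lift M q $ 1" "lift M p $ 2 = lift M q $ 2"
    by simp_all
  then show "p = q"
    by (simp add: prod_eq_iff)
qed

lemma card_square_grid_slab_le:
  fixes \<alpha> \<beta> c h :: real
  assumes \<alpha>\<beta>: "1/4 \<le> \<bar>\<alpha>\<bar> \<or> 1/4 \<le> \<bar>\<beta>\<bar>" and h: "0 \<le> h"
  shows "real (card {p\<in>square_grid M. \<bar>\<alpha> * of_int (fst p) + \<beta> * of_int (snd p) + c\<bar> \<le> h})
           \<le> (2 * real M + 1) * (8 * h + 1)"
proof -
  let ?R = "{- int M..int M}"
  have slab: "real (card {p\<in>?R \<times> ?R. \<bar>\<gamma> * of_int (fst p) + \<delta> * of_int (snd p) + c\<bar> \<le> h})
      \<le> (2 * real M + 1) * (8 * h + 1)" if \<gamma>: "1/4 \<le> \<bar>\<gamma>\<bar>" for \<gamma> \<delta> :: real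
  proof -
    have "2 * h \<le> 8 * h * \<bar>\<gamma>\<bar>"
      using mult_left_mono[OF \<gamma>, of "8 * h"] h by simp
    then have "2 * h / \<bar>\<gamma>\<bar> \<le> 8 * h"
      using \<gamma> by (simp add: divide_le_eq)
    have "real (card {p\<in>?R \<times> ?R. \<bar>\<gamma> * of_int (fst p) + \<delta> * of_int (snd p) + c\<bar> \<le> h})
        \<le> card ?R * (2 * h / \<bar>\<gamma>\<bar> + 1)"
      using \<gamma> h by (intro card_int_pairs_slab_le) auto
    also have "\<dots> \<le> (2 * real M + 1) * (8 * h + 1)"
      using \<open>2 * h / \<bar>\<gamma>\<bar> \<le> 8 * h\<close> h by (intro mult_mono) auto
    finally show ?thesis .
  qed
  from \<alpha>\<beta> show ?thesis
  proof
    assume "1/4 \<le> \<bar>\<alpha>\<bar>"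
    then show ?thesis
      using slab unfolding square_grid_def by blast
  next
    assume \<beta>: "1/4 \<le> \<bar>\<beta>\<bar>"
    let ?L = "{p\<in>?R \<times> ?R. \<bar>\<alpha> * of_int (fst p) + \<beta> * of_int (snd p) + c\<bar> \<le> h}"
    let ?L' = "{p\<in>?R \<times> ?R. \<bar>\<beta> * of_int (fst p) + \<alpha> * of_int (snd p) + c\<bar> \<le> h}"
    have "?L \<subseteq> prod.swap ` ?L'"
    proof
      fix p assume "p \<in> ?L"
      then have "prod.swap p \<in> ?L'"
        by (cases p) (simp add: algebra_simps)
      then show "p \<in> prod.swap ` ?L'"
        by (rule image_eqI[rotated]) simp
    qed
    then have "card ?L \<le> card ?L'"
      using card_mono[of "prod.swap ` ?L'" ?L] card_image_le[of ?L' prod.swap] by simp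
    then show ?thesis
      using slab[OF \<beta>, of \<alpha>] unfolding square_grid_def by linarith
  qed
qed

lemma grid_strip_subset_slab:
  assumes "0 < M" "0 \<le> d"
  shows "grid_strip M v d
           \<subseteq> {p\<in>square_grid M. \<bar>v $ 1 * of_int (fst p) + v $ 2 * of_int (snd p) + v $ 3 * M\<bar> \<le> 2 * d * M}"
proof
  fix p assume "p \<in> grid_strip M v d"
  then have p: "p \<in> square_grid M" "\<bar>v \<bullet> sgn (lift M p)\<bar> \<le> d"
    by (simp_all add: grid_strip_def)
  have "v \<bullet> lift M p = norm (lift M p) * (v \<bullet> sgn (lift M p))"
    using lift_nonzero[OF assms(1)] by (simp add: sgn_div_norm)
  then have "\<bar>v \<bullet> lift M p\<bar> \<le> 2 * M * d"
    using p norm_lift_le[of p M] assms(2) by (simp add: abs_mult mult_mono)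
  moreover have "v \<bullet> lift M p = v $ 1 * of_int (fst p) + v $ 2 * of_int (snd p) + v $ 3 * M"
    by (simp add: inner_real3)
  ultimately show "p \<in> {p\<in>square_grid M. \<bar>v $ 1 * of_int (fst p) + v $ 2 * of_int (snd p) + v $ 3 * M\<bar> \<le> 2 * d * M}"
    using p by (simp add: mult_ac)
qed

lemma card_grid_strip_le:
  fixes v :: "real^3"
  assumes v: "norm v = 1" and M: "0 < M" and d: "0 \<le> d" "d \<le> 1/8"
  shows "real (card (grid_strip M v d)) \<le> (2 * real M + 1) * (16 * d * M + 1)"
proof -
  let ?L = "{p\<in>square_grid M. \<bar>v $ 1 * of_int (fst p) + v $ 2 * of_int (snd p) + v $ 3 * M\<bar> \<le> 2 * d * M}"
  have "real (card (grid_strip M v d)) \<le> real (card ?L)"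
    using grid_strip_subset_slab[OF M d(1)] by (intro of_nat_mono card_mono) simp_all
  also have "\<dots> \<le> (2 * real M + 1) * (16 * d * M + 1)"
  proof (cases "1/4 \<le> \<bar>v $ 1\<bar> \<or> 1/4 \<le> \<bar>v $ 2\<bar>")
    case True
    then show ?thesis
      using card_square_grid_slab_le[OF True, of "2 * d * M" M "v $ 3 * M"] d by (simp add: mult.assoc)
  next
    case False
    \<comment> \<open>v is then nearly vertical and the plane at height M misses the slab\<close>
    have "(v $ 1)^2 \<le> (1/4)^2" "(v $ 2)^2 \<le> (1/4)^2"
      using False abs_le_square_iff[of "v $ 1" "1/4"] abs_le_square_iff[of "v $ 2" "1/4"] by simp_all
    then have "(v $ 3)^2 > (3/4)^2"
      using v norm_real3_square[of v] by (simp add: power2_eq_square)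
    then have "3/4 < \<bar>v $ 3\<bar>"
      using power2_less_imp_less[of "3/4" "\<bar>v $ 3\<bar>"] by simp
    then have v3: "3/4 * M < \<bar>v $ 3 * M\<bar>"
      using M by (simp add: abs_mult)
    have empty: "?L = {}"
    proof (rule ccontr)
      assume "?L \<noteq> {}"
      then obtain a b where ab: "(a, b) \<in> square_grid M"
        "\<bar>v $ 1 * of_int a + v $ 2 * of_int b + v $ 3 * M\<bar> \<le> 2 * d * M"
        by auto
      have "\<bar>of_int a\<bar> \<le> real M" "\<bar>of_int b\<bar> \<le> real M"
        using ab(1) by (auto simp: square_grid_def abs_le_iff)
      then have "\<bar>v $ 1 * of_int a\<bar> \<le> 1/4 * M" "\<bar>v $ 2 * of_int b\<bar> \<le> 1/4 * M"
        using False unfolding abs_mult by (auto intro: mult_mono[of _ "1/4" _ "real M", simplified])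
      moreover have "2 * d * M \<le> 1/4 * M"
        using mult_right_mono[OF d(2), of "2 * real M"] by simp
      ultimately show False
        using ab(2) v3 by linarith
    qed
    show ?thesis
      unfolding empty using d by simp
  qed
  finally show ?thesis .
qed

lemma grid_strip_subset:
  assumes "0 < M" "dist v w \<le> e"
  shows "grid_strip M v d \<subseteq> grid_strip M w (d + e)"
proof
  fix p assume "p \<in> grid_strip M v d"
  then have p: "p \<in> square_grid M" "\<bar>v \<bullet> sgn (lift M p)\<bar> \<le> d"
    by (simp_all add: grid_strip_def)
  have "\<bar>(w - v) \<bullet> sgn (lift M p)\<bar> \<le> norm (w - v) * norm (sgn (lift M p))"
    by (rule Cauchy_Schwarz_ineq2)
  also have "\<dots> \<le> e"
    using assms lift_nonzero[OF assms(1)] by (simp add: norm_sgn dist_norm norm_minus_commute)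
  finally show "p \<in> grid_strip M w (d + e)"
    using p by (simp add: grid_strip_def inner_diff_left)
qed

lemma exists_grid_strip_net:
  assumes N: "56 \<le> N"
  shows "\<exists>W. finite W \<and> card W \<le> (2 * N + 1) ^ 3 \<and>
    (\<forall>w\<in>W. real (card (grid_strip (N^2) w (4 / N))) \<le> 57 * real (card (square_grid (N^2))) / N) \<and>
    (\<forall>v. norm v = 1 \<longrightarrow> (\<exists>w\<in>W. grid_strip (N^2) v (1 / N) \<subseteq> grid_strip (N^2) w (4 / N)))"
proof -
  have N0: "0 < N" "0 < N^2"
    using N by simp_all
  obtain W0 :: "(real^3) set" where W0: "finite W0" "card W0 \<le> (2 * N + 1) ^ 3"
    and near: "\<And>v. v \<in> cball 0 1 \<Longrightarrow> \<exists>w\<in>W0. dist v w \<le> 3 / N"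
    using finite_grid_net_cball[OF N0(1), where 'n = 3] by auto
  \<comment> \<open>net points far from the sphere may have large strips\<close>
  define W where "W = {w\<in>W0. real (card (grid_strip (N^2) w (4 / N))) \<le> 57 * real (card (square_grid (N^2))) / N}"
  have bound: "16 * (7 / N) * real (N^2) + 1 \<le> 57 * (2 * real (N^2) + 1) / N"
  proof -
    have "16 * (7 / N) * real (N^2) + 1 = 112 * real N + 1"
      using N by (simp add: power2_eq_square)
    also have "\<dots> \<le> 114 * real N"
      using N by simp
    also have "\<dots> \<le> 57 * (2 * real (N^2) + 1) / N"
      using N by (simp add: field_simps power2_eq_square)
    finally show ?thesis .
  qed
  have strip_7: "real (card (grid_strip (N^2) v (7 / N))) \<le> 57 * real (card (square_grid (N^2))) / N"
    if "norm v = 1" for v :: "real^3"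
  proof -
    have "real (card (grid_strip (N^2) v (7 / N))) \<le> (2 * real (N^2) + 1) * (16 * (7 / N) * real (N^2) + 1)"
      using N by (intro card_grid_strip_le that) simp_all
    also have "\<dots> \<le> (2 * real (N^2) + 1) * (57 * (2 * real (N^2) + 1) / N)"
      using bound by (rule mult_left_mono) simp
    also have "\<dots> = 57 * real (card (square_grid (N^2))) / N"
      by (simp add: card_square_grid power2_eq_square algebra_simps)
    finally show ?thesis .
  qed
  show ?thesis
  proof (intro exI conjI ballI allI impI)
    show "finite W" "card W \<le> (2 * N + 1) ^ 3"
      using W0 card_mono[OF W0(1), of W] by (auto simp: W_def)
    show "real (card (grid_strip (N^2) w (4 / N))) \<le> 57 * real (card (square_grid (N^2))) / N" if "w \<in> W" for w
      using that by (simp add: W_def)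
    fix v :: "real^3"
    assume v: "norm v = 1"
    then obtain w where w: "w \<in> W0" "dist v w \<le> 3 / N"
      using near[of v] by auto
    have "grid_strip (N^2) w (4 / N) \<subseteq> grid_strip (N^2) v (7 / N)"
      using grid_strip_subset[OF N0(2), of w v "3 / N" "4 / N"] w by (simp add: dist_commute)
    then have "real (card (grid_strip (N^2) w (4 / N))) \<le> real (card (grid_strip (N^2) v (7 / N)))"
      by (intro of_nat_mono card_mono) simp_all
    then have "w \<in> W"
      using w(1) strip_7[OF v] by (simp add: W_def)
    moreover have "grid_strip (N^2) v (1 / N) \<subseteq> grid_strip (N^2) w (4 / N)"
      using grid_strip_subset[OF N0(2) w(2), of "1 / N"] by simp
    ultimately show "\<exists>w\<in>W. grid_strip (N^2) v (1 / N) \<subseteq> grid_strip (N^2) w (4 / N)"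
      by blast
  qed
qed

lemma exists_grid_map_few_in_strips:
  fixes N k :: nat
  assumes N: "56 \<le> N" "k \<le> N" and small: "(2 * real N + 1) ^ 3 * 57 ^ k / fact k < 1/2"
  shows "\<exists>f. (\<forall>i<N. f i \<in> square_grid (N^2)) \<and> inj_on f {..<N} \<and>
           (\<forall>v. norm v = 1 \<longrightarrow> card {i. i < N \<and> f i \<in> grid_strip (N^2) v (1 / N)} < k)"
proof -
  define M where "M = N^2"
  define G where "G = square_grid M"
  obtain W where W: "finite W" "card W \<le> (2 * N + 1) ^ 3"
    and small_strips: "\<And>w. w \<in> W \<Longrightarrow> real (card (grid_strip M w (4 / N))) \<le> 57 * real (card G) / N"
    and covers: "\<And>v. norm v = 1 \<Longrightarrow> \<exists>w\<in>W. grid_strip M v (1 / N) \<subseteq> grid_strip M w (4 / N)"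
    using exists_grid_strip_net[OF N(1)] unfolding M_def G_def by blast
  have "real (card W) * 57 ^ k / fact k \<le> (2 * real N + 1) ^ 3 * 57 ^ k / fact k"
    using of_nat_mono[OF W(2), where 'a = real] by (simp add: add.commute divide_right_mono)
  moreover have "real N ^ 2 / card G \<le> 1/4"
  proof -
    have "(2 * real M + 1) ^ 2 = 4 * real M ^ 2 + 4 * real N ^ 2 + 1"
      by (simp add: M_def power2_eq_square algebra_simps)
    then have "4 * real N ^ 2 \<le> (2 * real M + 1) ^ 2"
      using zero_le_power2[of "real M"] by linarith
    then show ?thesis
      by (simp add: G_def card_square_grid field_simps)
  qed
  ultimately have "real (card W) * 57 ^ k / fact k + real N ^ 2 / card G < 1"
    using small by linarith
  moreover have "(0, 0) \<in> G"
    by (simp add: G_def square_grid_def)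
  moreover have "grid_strip M w (4 / N) \<subseteq> G" for w
    by (auto simp: grid_strip_def G_def)
  ultimately obtain f where f: "\<forall>i<N. f i \<in> G" "inj_on f {..<N}"
    and few: "\<forall>w\<in>W. card {i. i < N \<and> f i \<in> grid_strip M w (4 / N)} < k"
    using exists_inj_on_few_hits[of G W N k "\<lambda>w. grid_strip M w (4 / N)" 57] W(1) N small_strips
    by (auto simp: G_def)
  have "card {i. i < N \<and> f i \<in> grid_strip M v (1 / N)} < k" if v: "norm v = 1" for v
  proof -
    obtain w where w: "w \<in> W" "grid_strip M v (1 / N) \<subseteq> grid_strip M w (4 / N)"
      using covers[OF v] by blast
    then have "card {i. i < N \<and> f i \<in> grid_strip M v (1 / N)} \<le> card {i. i < N \<and> f i \<in> grid_strip M w (4 / N)}"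
      by (intro card_mono) auto
    also have "\<dots> < k"
      using few w(1) by blast
    finally show ?thesis .
  qed
  then show ?thesis
    using f unfolding G_def M_def by blast
qed

lemma exists_sphere_points_few_in_strips:
  fixes N :: nat and t :: real
  assumes N: "56 \<le> N" and t: "57 * exp 1 \<le> t" "t + 1 \<le> N"
    and growth: "2 * (2 * real N + 1) ^ 3 < exp (t * ln (t / (57 * exp 1)))"
  shows "\<exists>x :: nat \<Rightarrow> real^3. inj_on x {..<N} \<and> (\<forall>i<N. norm (x i) = 1) \<and>
           (\<forall>v. norm v = 1 \<longrightarrow> real (card {i. i < N \<and> \<bar>v \<bullet> x i\<bar> \<le> 1 / real N}) \<le> t)"
proof -
  define k where "k = nat \<lceil>t\<rceil>"
  have "0 < t"
    using t(1) by (smt (verit) exp_gt_zero)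
  then have k: "t \<le> real k" "real k < t + 1"
    unfolding k_def by linarith+
  then have "k \<le> N"
    using t by (simp flip: of_nat_le_iff)
  moreover have "(2 * real N + 1) ^ 3 * 57 ^ k / fact k < 1/2"
    using mult_power_div_fact_less_half[of "(2 * real N + 1) ^ 3" 57 t k] t k growth by simp
  ultimately obtain f where f: "inj_on f {..<N}" "\<forall>i<N. f i \<in> square_grid (N^2)"
    and few: "\<And>v. norm v = 1 \<Longrightarrow> card {i. i < N \<and> f i \<in> grid_strip (N^2) v (1 / N)} < k"
    using exists_grid_map_few_in_strips[OF N] by blast
  define x where "x = (\<lambda>i. sgn (lift (N^2) (f i)))"
  have N0: "0 < N^2"
    using N by simp
  have "real (card {i. i < N \<and> \<bar>v \<bullet> x i\<bar> \<le> 1 / real N}) \<le> t" if "norm v = 1" for v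
  proof -
    have "{i. i < N \<and> \<bar>v \<bullet> x i\<bar> \<le> 1 / real N} = {i. i < N \<and> f i \<in> grid_strip (N^2) v (1 / N)}"
      using f(2) by (auto simp: grid_strip_def x_def)
    then have "real (card {i. i < N \<and> \<bar>v \<bullet> x i\<bar> \<le> 1 / real N}) + 1 \<le> real k"
      using few[OF that] by (simp flip: of_nat_Suc)
    then show ?thesis
      using k by linarith
  qed
  moreover have "inj_on x {..<N}"
    using comp_inj_on[OF f(1) inj_on_subset[OF inj_sgn_lift[OF N0]]] by (simp add: x_def comp_def)
  moreover have "\<forall>i<N. norm (x i) = 1"
    using lift_nonzero[OF N0] by (simp add: x_def norm_sgn)
  ultimately show ?thesis
    by blast
qed

theorem mainTheorem12:
  shows "\<exists>c::real. \<exists>N0::nat. \<forall>N\<ge>N0. \<exists>x :: nat \<Rightarrow> real^3.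
           inj_on x {..<N} \<and> (\<forall>i<N. norm (x i) = 1) \<and>
           (\<forall>v :: real^3. norm v = 1 \<longrightarrow>
              real (card {i. i < N \<and> \<bar>v \<bullet> x i\<bar> \<le> 1 / real N})
                \<le> c * ln (real N) / ln (ln (real N)))"
proof -
  let ?t = "\<lambda>x::real. 8 * ln x / ln (ln x)"
  have "\<forall>\<^sub>F x in at_top. 56 \<le> (x::real)" "\<forall>\<^sub>F x in at_top. 57 * exp 1 \<le> ?t x"
    "\<forall>\<^sub>F x in at_top. ?t x + 1 \<le> x"
    "\<forall>\<^sub>F x in at_top. 2 * (2 * x + 1) ^ 3 < exp (?t x * ln (?t x / (57 * exp 1)))"
    by real_asymp+
  then have "\<forall>\<^sub>F x in at_top. 56 \<le> x \<and> 57 * exp 1 \<le> ?t x \<and> ?t x + 1 \<le> x \<and>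
      2 * (2 * x + 1) ^ 3 < exp (?t x * ln (?t x / (57 * exp 1)))"
    by (intro eventually_conj)
  then have "\<forall>\<^sub>F N in sequentially. 56 \<le> real N \<and> 57 * exp 1 \<le> ?t N \<and> ?t N + 1 \<le> real N \<and>
      2 * (2 * real N + 1) ^ 3 < exp (?t N * ln (?t N / (57 * exp 1)))"
    by (rule eventually_compose_filterlim[OF _ filterlim_real_sequentially])
  then obtain N0 where "\<And>N. N \<ge> N0 \<Longrightarrow> 56 \<le> real N \<and> 57 * exp 1 \<le> ?t N \<and> ?t N + 1 \<le> real N \<and>
      2 * (2 * real N + 1) ^ 3 < exp (?t N * ln (?t N / (57 * exp 1)))"
    unfolding eventually_sequentially by blast
  then have "\<forall>N\<ge>N0. \<exists>x :: nat \<Rightarrow> real^3. inj_on x {..<N} \<and> (\<forall>i<N. norm (x i) = 1) \<and>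
      (\<forall>v. norm v = 1 \<longrightarrow> real (card {i. i < N \<and> \<bar>v \<bullet> x i\<bar> \<le> 1 / real N}) \<le> ?t N)"
    by (auto intro!: exists_sphere_points_few_in_strips)
  then show ?thesis
    by auto
qed

end
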